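(* Let $R$ be a commutative ring of Krull dimension zero. Then every faithful $R$-module $M$ satisfies the dual of proper strong Property $\mathcal{A}$. In particular, every $R$-module $M$ satisfies the dual of proper strong Property $\mathcal{A}$ as an $R/\mathrm{Ann}_R(M)$-module.
   Context: All rings are commutative with identity. For an $R$-module $M$, $W_R(M)=\{r\in R : rM\neq M\}$. $M$ satisfies the dual of proper strong Property $\mathcal{A}$ if for every proper finitely generated ideal $I=\langle a_1,\dots,a_n\rangle$ of $R$ with $a_i\in W_R(M)$ for all $i$, we have $IM\neq M$. *)

theory Defs
  imports "HOL-Algebra.Module" "HOL-Algebra.QuotRing"
begin

definition krull_dim_zero :: "('a, 'c) ring_scheme \<Rightarrow> bool" where
  "krull_dim_zero R \<longleftrightarrow> \<one>\<^bsub>R\<^esub> \<noteq> \<zero>\<^bsub>R\<^esub> \<and> (\<forall>P. primeideal P R \<longrightarrow> maximalideal P R)"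

definition W_mod :: "('a, 'c) ring_scheme \<Rightarrow> ('a, 'b, 'd) module_scheme \<Rightarrow> 'a set" where
  "W_mod R M = {r \<in> carrier R. (\<lambda>m. r \<odot>\<^bsub>M\<^esub> m) ` carrier M \<noteq> carrier M}"

definition ideal_smult :: "('a, 'c) ring_scheme \<Rightarrow> ('a, 'b, 'd) module_scheme \<Rightarrow> 'a set \<Rightarrow> 'b set" where
  "ideal_smult R M I = \<Inter>{N. submodule N R M \<and> (\<forall>a\<in>I. \<forall>m\<in>carrier M. a \<odot>\<^bsub>M\<^esub> m \<in> N)}"

text \<open>Dual of proper strong Property A.  A finitely generated ideal with generators
  a_1,...,a_n (n >= 1) in W_R(M) is the ideal generated by a finite nonempty subset of W_R(M).\<close>
definition dual_proper_strong_A :: "('a, 'c) ring_scheme \<Rightarrow> ('a, 'b, 'd) module_scheme \<Rightarrow> bool" where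
  "dual_proper_strong_A R M \<longleftrightarrow>
     (\<forall>S. finite S \<and> S \<noteq> {} \<and> S \<subseteq> W_mod R M \<and> genideal R S \<noteq> carrier R
          \<longrightarrow> ideal_smult R M (genideal R S) \<noteq> carrier M)"

definition faithful_mod :: "('a, 'c) ring_scheme \<Rightarrow> ('a, 'b, 'd) module_scheme \<Rightarrow> bool" where
  "faithful_mod R M \<longleftrightarrow> (\<forall>r\<in>carrier R. (\<forall>m\<in>carrier M. r \<odot>\<^bsub>M\<^esub> m = \<zero>\<^bsub>M\<^esub>) \<longrightarrow> r = \<zero>\<^bsub>R\<^esub>)"

definition ann_mod :: "('a, 'c) ring_scheme \<Rightarrow> ('a, 'b, 'd) module_scheme \<Rightarrow> 'a set" where
  "ann_mod R M = {r \<in> carrier R. \<forall>m\<in>carrier M. r \<odot>\<^bsub>M\<^esub> m = \<zero>\<^bsub>M\<^esub>}"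

text \<open>M viewed as an R/Ann_R(M)-module: a coset acts through any of its representatives.\<close>
definition quot_ann_module :: "('a, 'c) ring_scheme \<Rightarrow> ('a, 'b, 'd) module_scheme \<Rightarrow> ('a set, 'b) module" where
  "quot_ann_module R M =
    \<lparr>carrier = carrier M, monoid.mult = monoid.mult M, one = \<one>\<^bsub>M\<^esub>,
     zero = \<zero>\<^bsub>M\<^esub>, add = add M,
     smult = (\<lambda>c m. (SOME r. r \<in> c) \<odot>\<^bsub>M\<^esub> m)\<rparr>"

end

(* Ring_Divisibility must precede Defs: in the other order "module" would denote
   the type-class locale Modules.module rather than HOL-Algebra's module. *)
theory Submission
  imports "HOL-Algebra.Ring_Divisibility" Defs
begin

text \<open>
  A zero-dimensional ring is \<pi>-regular: every \<open>a\<close> satisfies \<open>a\<^sup>p = a\<^sup>p\<^sup>+\<^sup>1 b\<close> for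
  some \<open>p\<close> and \<open>b\<close>. Otherwise the multiplicative set of all \<open>a\<^sup>n (1 - a b)\<close> misses \<open>0\<close>
  and hence avoids a prime ideal \<open>P\<close>; \<open>P\<close> is maximal and does not contain \<open>a\<close>, so
  \<open>1 - a r \<in> P\<close> for some \<open>r\<close>, although this element lies in the set.

  In a \<pi>-regular ring, \<open>e = (a b)\<^sup>p\<^sup>+\<^sup>1\<close> is an idempotent multiple of \<open>a\<close> with
  \<open>(1 - e) a\<^sup>p = 0\<close>. For an ideal \<open>I\<close> with finitely many generators the complements
  \<open>1 - e\<close> multiply to an idempotent \<open>u\<close> with \<open>1 - u \<in> I\<close> and \<open>u a\<^sup>p = 0\<close> for every
  generator \<open>a\<close>. If \<open>IM = M\<close>, the generators can be removed one at a time, because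
  \<open>uM \<subseteq> (a, H)M\<close> and \<open>u a\<^sup>p = 0\<close> give \<open>uM \<subseteq> HM\<close>; thus \<open>uM = 0\<close>, so \<open>u = 0\<close> for a
  faithful \<open>M\<close> and \<open>I = R\<close>. The second claim follows because \<open>M\<close> is a faithful
  module over \<open>R/Ann(M)\<close>, which is \<pi>-regular as a quotient of \<open>R\<close>.
\<close>

section \<open>Zero-dimensional rings are \<pi>-regular\<close>

definition pi_regular :: "('a, 'c) ring_scheme \<Rightarrow> bool" where
  "pi_regular R \<longleftrightarrow>
     (\<forall>a\<in>carrier R. \<exists>p b. b \<in> carrier R \<and> a [^]\<^bsub>R\<^esub> (p::nat) = a [^]\<^bsub>R\<^esub> Suc p \<otimes>\<^bsub>R\<^esub> b)"

lemma (in cring) ideal_add_cgenideal: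
  assumes P: "ideal P R" and x: "x \<in> carrier R"
  shows "ideal (P <+>\<^bsub>R\<^esub> PIdl x) R" and "P \<subseteq> P <+>\<^bsub>R\<^esub> PIdl x" and "x \<in> P <+>\<^bsub>R\<^esub> PIdl x"
    and "\<And>s. s \<in> P <+>\<^bsub>R\<^esub> PIdl x \<Longrightarrow> \<exists>p r. p \<in> P \<and> r \<in> carrier R \<and> s = p \<oplus> r \<otimes> x"
proof -
  show "ideal (P <+>\<^bsub>R\<^esub> PIdl x) R" by (rule add_ideals[OF P cgenideal_ideal[OF x]])
  have zero: "\<zero> \<in> P" using additive_subgroup.zero_closed[OF ideal.axioms(1)[OF P]] .
  show "P \<subseteq> P <+>\<^bsub>R\<^esub> PIdl x"
  proof
    fix p assume p: "p \<in> P"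
    then have "p = p \<oplus> \<zero> \<otimes> x" using ideal.Icarr[OF P] x by simp
    then show "p \<in> P <+>\<^bsub>R\<^esub> PIdl x" unfolding set_add_def' cgenideal_def using p by blast
  qed
  have "x = \<zero> \<oplus> \<one> \<otimes> x" using x by simp
  then show "x \<in> P <+>\<^bsub>R\<^esub> PIdl x" unfolding set_add_def' cgenideal_def using zero by blast
  show "\<And>s. s \<in> P <+>\<^bsub>R\<^esub> PIdl x \<Longrightarrow> \<exists>p r. p \<in> P \<and> r \<in> carrier R \<and> s = p \<oplus> r \<otimes> x"
    unfolding set_add_def' cgenideal_def by blast
qed

lemma (in cring) primeideal_disjoint_mult_closed:
  assumes one: "\<one> \<in> S" and zero: "\<zero> \<notin> S" and mult: "\<And>s t. s \<in> S \<Longrightarrow> t \<in> S \<Longrightarrow> s \<otimes> t \<in> S"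
  obtains P where "primeideal P R" "P \<inter> S = {}"
proof -
  define A where "A = {J. ideal J R \<and> J \<inter> S = {}}"
  have "\<exists>P\<in>A. \<forall>X\<in>A. P \<subseteq> X \<longrightarrow> X = P"
  proof (rule subset_Zorn_nonempty)
    show "A \<noteq> {}" unfolding A_def using zeroideal zero by auto
  next
    fix C assume C: "C \<noteq> {}" "subset.chain A C"
    then have "subset.chain {I. ideal I R} C" unfolding pred_on.chain_def A_def by blast
    from chain_Union_is_ideal[OF this] have "ideal (\<Union>C) R" using C(1) by (simp only: if_False)
    then show "\<Union>C \<in> A" using C(2) unfolding A_def pred_on.chain_def by blast
  qed
  then obtain P where "P \<in> A" and P_max: "\<And>X. X \<in> A \<Longrightarrow> P \<subseteq> X \<Longrightarrow> X = P"
    by blast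
  then have P: "ideal P R" "P \<inter> S = {}" unfolding A_def by auto
  have meet: "\<exists>p r. p \<in> P \<and> r \<in> carrier R \<and> p \<oplus> r \<otimes> x \<in> S"
    if x: "x \<in> carrier R" "x \<notin> P" for x
  proof -
    note J = ideal_add_cgenideal[OF P(1) x(1)]
    have "P <+>\<^bsub>R\<^esub> PIdl x \<notin> A" using P_max J(2,3) x(2) by blast
    then obtain s where "s \<in> P <+>\<^bsub>R\<^esub> PIdl x" "s \<in> S" unfolding A_def using J(1) by blast
    then show ?thesis using J(4) by blast
  qed
  have "primeideal P R"
  proof (rule primeidealI[OF P(1) is_cring])
    show "carrier R \<noteq> P" using one P(2) by auto
    fix x y assume x: "x \<in> carrier R" and y: "y \<in> carrier R" and xy: "x \<otimes> y \<in> P"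
    show "x \<in> P \<or> y \<in> P"
    proof (rule ccontr)
      assume "\<not> (x \<in> P \<or> y \<in> P)"
      then obtain p q r t where pr: "p \<in> P" "r \<in> carrier R" "p \<oplus> r \<otimes> x \<in> S"
        and qt: "q \<in> P" "t \<in> carrier R" "q \<oplus> t \<otimes> y \<in> S"
        using meet x y by meson
      have pq: "p \<in> carrier R" "q \<in> carrier R" using pr(1) qt(1) ideal.Icarr[OF P(1)] by auto
      have "(p \<oplus> r \<otimes> x) \<otimes> (q \<oplus> t \<otimes> y) = p \<otimes> (q \<oplus> t \<otimes> y) \<oplus> (q \<otimes> (r \<otimes> x) \<oplus> (r \<otimes> t) \<otimes> (x \<otimes> y))"
        using pq pr(2) qt(2) x y by algebra
      moreover have "\<dots> \<in> P"
        using pr(1,2) qt(1,2) pq x y xy ideal.I_r_closed[OF P(1)] ideal.I_l_closed[OF P(1)]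
          additive_subgroup.a_closed[OF ideal.axioms(1)[OF P(1)]] by simp
      moreover have "(p \<oplus> r \<otimes> x) \<otimes> (q \<oplus> t \<otimes> y) \<in> S" using mult pr(3) qt(3) by blast
      ultimately show False using P(2) by auto
    qed
  qed
  then show ?thesis using P(2) that by blast
qed

lemma (in cring) maximalideal_one_eq_add:
  assumes P: "maximalideal P R" and a: "a \<in> carrier R" "a \<notin> P"
  shows "\<exists>p\<in>P. \<exists>r\<in>carrier R. \<one> = p \<oplus> r \<otimes> a"
proof -
  note J = ideal_add_cgenideal[OF maximalideal.axioms(1)[OF P] a(1)]
  have "P <+>\<^bsub>R\<^esub> PIdl a = P \<or> P <+>\<^bsub>R\<^esub> PIdl a = carrier R"
    using maximalideal.I_maximal[OF P J(1,2)] ideal.Icarr[OF J(1)] by blast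
  then have "P <+>\<^bsub>R\<^esub> PIdl a = carrier R" using J(3) a(2) by auto
  then show ?thesis using J(4)[of \<one>] by auto
qed

lemma (in cring) pow_one_minus_mult:
  assumes a: "a \<in> carrier R" and b: "b \<in> carrier R" and c: "c \<in> carrier R"
  shows "(a [^] (n::nat) \<otimes> (\<one> \<ominus> a \<otimes> b)) \<otimes> (a [^] (m::nat) \<otimes> (\<one> \<ominus> a \<otimes> c))
    = a [^] (n + m) \<otimes> (\<one> \<ominus> a \<otimes> (b \<oplus> c \<ominus> a \<otimes> b \<otimes> c))"
proof -
  have "(x \<otimes> (\<one> \<ominus> a \<otimes> b)) \<otimes> (y \<otimes> (\<one> \<ominus> a \<otimes> c))
      = (x \<otimes> y) \<otimes> (\<one> \<ominus> a \<otimes> (b \<oplus> c \<ominus> a \<otimes> b \<otimes> c))"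
    if "x \<in> carrier R" "y \<in> carrier R" for x y
    using that a b c by algebra
  from this[of "a [^] n" "a [^] m"] show ?thesis using a by (simp add: nat_pow_mult)
qed

lemma (in cring) pi_regular_if_krull_dim_zero:
  assumes kd: "krull_dim_zero R"
  shows "pi_regular R"
  unfolding pi_regular_def
proof
  fix a assume a: "a \<in> carrier R"
  show "\<exists>p b. b \<in> carrier R \<and> a [^] (p::nat) = a [^] Suc p \<otimes> b"
  proof (rule ccontr)
    assume not_reg: "\<not> ?thesis"
    define S where "S = {a [^] (n::nat) \<otimes> (\<one> \<ominus> a \<otimes> b) | n b. b \<in> carrier R}"
    have in_S: "a [^] n \<otimes> (\<one> \<ominus> a \<otimes> b) \<in> S" if "b \<in> carrier R" for n :: nat and b
      unfolding S_def using that by blast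
    have zero: "\<zero> \<notin> S"
    proof
      assume "\<zero> \<in> S"
      then obtain n b where b: "b \<in> carrier R" and z: "\<zero> = a [^] (n::nat) \<otimes> (\<one> \<ominus> a \<otimes> b)"
        unfolding S_def by blast
      have "x \<ominus> x \<otimes> (\<one> \<ominus> a \<otimes> b) = x \<otimes> a \<otimes> b" if "x \<in> carrier R" for x
        using that a b by algebra
      from this[of "a [^] n"] have "a [^] n = a [^] Suc n \<otimes> b" using z[symmetric] a by (simp add: a_minus_def)
      then show False using not_reg b by blast
    qed
    have mult: "s \<otimes> t \<in> S" if st: "s \<in> S" "t \<in> S" for s t
    proof -
      obtain n b where b: "b \<in> carrier R" and s: "s = a [^] (n::nat) \<otimes> (\<one> \<ominus> a \<otimes> b)"
        using st(1) unfolding S_def by blast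
      obtain m c where c: "c \<in> carrier R" and t: "t = a [^] (m::nat) \<otimes> (\<one> \<ominus> a \<otimes> c)"
        using st(2) unfolding S_def by blast
      show ?thesis using in_S pow_one_minus_mult[OF a b c] a b c by (simp add: s t)
    qed
    have one: "\<one> \<in> S" using in_S[where n=0 and b=\<zero>] a by (simp add: a_minus_def)
    obtain P where P: "primeideal P R" "P \<inter> S = {}"
      using primeideal_disjoint_mult_closed[OF one zero mult] by blast
    have P_max: "maximalideal P R" using P(1) kd unfolding krull_dim_zero_def by blast
    have "a \<notin> P" using in_S[where n=1 and b=\<zero>] a P(2) by (auto simp: a_minus_def)
    then obtain p r where pr: "p \<in> P" "r \<in> carrier R" "\<one> = p \<oplus> r \<otimes> a"
      using maximalideal_one_eq_add[OF P_max a] by blast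
    have p: "p \<in> carrier R" using ideal.Icarr[OF primeideal.axioms(1)[OF P(1)] pr(1)] .
    have "p = (p \<oplus> r \<otimes> a) \<ominus> a \<otimes> r" using p pr(2) a by algebra
    then have "p = a [^] (0::nat) \<otimes> (\<one> \<ominus> a \<otimes> r)" using pr(3)[symmetric] a pr(2) by simp
    then show False using in_S[OF pr(2)] pr(1) P(2) by blast
  qed
qed

section \<open>Idempotents in finitely generated ideals\<close>

lemma (in comm_monoid) idempotent_mult:
  assumes "x \<in> carrier G" "y \<in> carrier G" "x \<otimes> x = x" "y \<otimes> y = y"
  shows "(x \<otimes> y) \<otimes> (x \<otimes> y) = x \<otimes> y"
proof -
  have "(x \<otimes> y) \<otimes> (x \<otimes> y) = (x \<otimes> x) \<otimes> (y \<otimes> y)" using assms(1,2) by (simp add: m_ac)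
  then show ?thesis using assms(3,4) by simp
qed

lemma (in cring) one_minus_idempotent:
  assumes "e \<in> carrier R" "e \<otimes> e = e"
  shows "(\<one> \<ominus> e) \<otimes> (\<one> \<ominus> e) = \<one> \<ominus> e"
proof -
  have "(\<one> \<ominus> e) \<otimes> (\<one> \<ominus> e) = (\<one> \<ominus> e) \<oplus> (e \<otimes> e \<ominus> e)"
    using assms(1) by algebra
  then show ?thesis using assms by (simp add: a_minus_def r_neg)
qed

lemma (in cring) one_minus_mult_one_minus_mem:
  assumes I: "ideal I R" and v: "v \<in> carrier R" and e: "e \<in> carrier R"
    and "\<one> \<ominus> v \<in> I" "e \<in> I"
  shows "\<one> \<ominus> v \<otimes> (\<one> \<ominus> e) \<in> I"
proof -
  have "\<one> \<ominus> v \<otimes> (\<one> \<ominus> e) = (\<one> \<ominus> v) \<oplus> v \<otimes> e" using v e by algebra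
  then show ?thesis
    using assms ideal.I_l_closed[OF I] additive_subgroup.a_closed[OF ideal.axioms(1)[OF I]] by simp
qed

(* The exponent Suc p rather than p keeps e inside the ideal generated by a even when p = 0. *)
lemma (in cring) pi_regular_elem_idempotent:
  assumes a: "a \<in> carrier R" and b: "b \<in> carrier R" and ab: "a [^] (p::nat) = a [^] Suc p \<otimes> b"
  defines "e \<equiv> (a \<otimes> b) [^] Suc p"
  shows "e \<in> carrier R" "e \<otimes> e = e" "(\<one> \<ominus> e) \<otimes> a [^] p = \<zero>" "e \<in> PIdl a"
proof -
  have absorb: "a [^] p \<otimes> (a \<otimes> b) [^] k = a [^] p" for k :: nat
  proof (induction k)
    case (Suc k)
    have "a [^] p \<otimes> (a \<otimes> b) [^] Suc k = (a [^] p \<otimes> a \<otimes> b) \<otimes> (a \<otimes> b) [^] k"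
      using a b by (simp add: m_ac)
    also have "a [^] p \<otimes> a \<otimes> b = a [^] p" using ab by simp
    finally show ?case using Suc by simp
  qed (use a in simp)
  define w where "w = a \<otimes> b [^] Suc p"
  have w: "w \<in> carrier R" unfolding w_def using a b by simp
  have e_eq: "e = a [^] p \<otimes> w"
    unfolding e_def w_def using a b by (simp add: nat_pow_distrib m_ac)
  show e: "e \<in> carrier R" unfolding e_def using a b by simp
  have absorb_e: "a [^] p \<otimes> e = a [^] p" unfolding e_def by (rule absorb)
  have "e \<otimes> e = (a [^] p \<otimes> e) \<otimes> w"
    using e w a by (simp add: m_ac e_eq[symmetric] m_comm[of w "a [^] p"])
  then show "e \<otimes> e = e" unfolding absorb_e e_eq[symmetric] .
  have "(\<one> \<ominus> e) \<otimes> x = x \<ominus> x \<otimes> e" if "x \<in> carrier R" for x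
    using that e by algebra
  from this[of "a [^] p"] show "(\<one> \<ominus> e) \<otimes> a [^] p = \<zero>" using absorb_e a by (simp add: a_minus_def r_neg)
  show "e \<in> PIdl a" unfolding cgenideal_def e_def using a b
    by (intro CollectI exI[of _ "(a \<otimes> b) [^] p \<otimes> b"]) (simp add: m_ac)
qed

lemma (in cring) pi_regular_finite_idempotent:
  assumes pr: "pi_regular R" and G: "finite G" "G \<subseteq> carrier R"
  obtains u where "u \<in> carrier R" "u \<otimes> u = u" "\<one> \<ominus> u \<in> Idl G"
    "\<And>a. a \<in> G \<Longrightarrow> \<exists>p::nat. u \<otimes> a [^] p = \<zero>"
proof -
  have "\<exists>u \<in> carrier R. u \<otimes> u = u \<and> \<one> \<ominus> u \<in> Idl G \<and> (\<forall>a\<in>G. \<exists>p::nat. u \<otimes> a [^] p = \<zero>)"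
    using G
  proof (induction G rule: finite_induct)
    case empty
    have "\<one> \<ominus> \<one> \<in> Idl {}"
      using additive_subgroup.zero_closed[OF ideal.axioms(1)[OF genideal_ideal]] by (simp add: r_neg a_minus_def)
    then show ?case by (intro bexI[of _ \<one>]) auto
  next
    case (insert a F)
    have a: "a \<in> carrier R" and F: "F \<subseteq> carrier R" using insert.prems by auto
    obtain v where v: "v \<in> carrier R" "v \<otimes> v = v" "\<one> \<ominus> v \<in> Idl F"
      and v_nil: "\<forall>x\<in>F. \<exists>q::nat. v \<otimes> x [^] q = \<zero>"
      using insert.IH F by blast
    obtain p b where b: "b \<in> carrier R" and ab: "a [^] (p::nat) = a [^] Suc p \<otimes> b"
      using pr a unfolding pi_regular_def by blast
    define e where "e = (a \<otimes> b) [^] Suc p"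
    note e = pi_regular_elem_idempotent[OF a b ab, folded e_def]
    let ?I = "Idl (insert a F)"
    have I: "ideal ?I R" using insert.prems by (rule genideal_ideal)
    have "e \<in> ?I"
      using e(4) cgenideal_minimal[OF I] genideal_self[OF insert.prems] by blast
    moreover have "\<one> \<ominus> v \<in> ?I"
      using v(3) subset_Idl_subset[OF insert.prems, of F] by blast
    ultimately have "\<one> \<ominus> v \<otimes> (\<one> \<ominus> e) \<in> ?I"
      using one_minus_mult_one_minus_mem[OF I v(1) e(1)] by blast
    moreover have "(v \<otimes> (\<one> \<ominus> e)) \<otimes> (v \<otimes> (\<one> \<ominus> e)) = v \<otimes> (\<one> \<ominus> e)"
      using idempotent_mult[OF v(1) _ v(2) one_minus_idempotent[OF e(1,2)]] e(1) by simp
    moreover have "\<exists>q::nat. v \<otimes> (\<one> \<ominus> e) \<otimes> x [^] q = \<zero>" if x: "x \<in> insert a F" for x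
    proof (cases "x = a")
      case True
      then show ?thesis using e(1,3) v(1) a by (intro exI[of _ p]) (simp add: m_assoc)
    next
      case False
      then obtain q :: nat where q: "v \<otimes> x [^] q = \<zero>" using x v_nil by auto
      have "v \<otimes> (\<one> \<ominus> e) \<otimes> x [^] q = (\<one> \<ominus> e) \<otimes> (v \<otimes> x [^] q)"
        using e(1) v(1) x insert.prems by (auto simp: m_ac)
      then show ?thesis using q e(1) by auto
    qed
    ultimately show ?case using v(1) e(1) by blast
  qed
  then show ?thesis using that by blast
qed

section \<open>The submodule \<open>IM\<close>\<close>

lemma (in module) submodule_zero: "submodule N R M \<Longrightarrow> \<zero>\<^bsub>M\<^esub> \<in> N"
  using subgroup.one_closed[OF submodule.axioms(1)] by fastforce

lemma (in module) ideal_smult_submodule: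
  assumes "A \<subseteq> carrier R"
  shows "submodule (ideal_smult R M A) R M"
proof -
  let ?S = "{N. submodule N R M \<and> (\<forall>a\<in>A. \<forall>m\<in>carrier M. a \<odot>\<^bsub>M\<^esub> m \<in> N)}"
  have "carrier M \<in> ?S" using carrier_is_submodule assms by auto
  then show ?thesis unfolding ideal_smult_def
  proof (intro submoduleI)
    show "\<ominus>\<^bsub>M\<^esub> a \<in> \<Inter>?S" if "a \<in> \<Inter>?S" for a using that submoduleE(3) by blast
    show "a \<oplus>\<^bsub>M\<^esub> b \<in> \<Inter>?S" if "a \<in> \<Inter>?S" "b \<in> \<Inter>?S" for a b using that submoduleE(5) by blast
    show "a \<odot>\<^bsub>M\<^esub> x \<in> \<Inter>?S" if "a \<in> carrier R" "x \<in> \<Inter>?S" for a x using that submoduleE(4) by blast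
  qed (auto intro: submodule_zero)
qed

lemma (in module) smult_mem_ideal_smult:
  "a \<in> A \<Longrightarrow> m \<in> carrier M \<Longrightarrow> a \<odot>\<^bsub>M\<^esub> m \<in> ideal_smult R M A"
  unfolding ideal_smult_def by auto

lemma (in module) ideal_smult_least:
  "submodule N R M \<Longrightarrow> (\<And>a m. a \<in> A \<Longrightarrow> m \<in> carrier M \<Longrightarrow> a \<odot>\<^bsub>M\<^esub> m \<in> N) \<Longrightarrow>
    ideal_smult R M A \<subseteq> N"
  unfolding ideal_smult_def by auto

lemma (in module) ideal_smult_empty: "ideal_smult R M {} = {\<zero>\<^bsub>M\<^esub>}"
proof
  show "ideal_smult R M {} \<subseteq> {\<zero>\<^bsub>M\<^esub>}" by (rule ideal_smult_least) (auto intro: submoduleI)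
  show "{\<zero>\<^bsub>M\<^esub>} \<subseteq> ideal_smult R M {}" using submodule_zero[OF ideal_smult_submodule] by auto
qed

lemma (in module) submodule_smult_preimage:
  assumes c: "c \<in> carrier R" and N: "submodule N R M"
  shows "submodule {z \<in> carrier M. c \<odot>\<^bsub>M\<^esub> z \<in> N} R M"
proof (rule submoduleI)
  show "a \<odot>\<^bsub>M\<^esub> z \<in> {z \<in> carrier M. c \<odot>\<^bsub>M\<^esub> z \<in> N}"
    if "a \<in> carrier R" "z \<in> {z \<in> carrier M. c \<odot>\<^bsub>M\<^esub> z \<in> N}" for a z
  proof -
    have "c \<odot>\<^bsub>M\<^esub> (a \<odot>\<^bsub>M\<^esub> z) = a \<odot>\<^bsub>M\<^esub> (c \<odot>\<^bsub>M\<^esub> z)"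
      using that c by (simp add: smult_assoc1[symmetric] m_comm)
    then show ?thesis using that submoduleE(4)[OF N] by auto
  qed
qed (use c submodule_zero[OF N] submoduleE(3,5)[OF N] in \<open>auto simp: smult_r_minus smult_r_distr\<close>)

lemma (in module) ideal_smult_genideal:
  assumes "A \<subseteq> carrier R"
  shows "ideal_smult R M (genideal R A) = ideal_smult R M A"
proof
  let ?N = "ideal_smult R M A"
  have N: "submodule ?N R M" using assms by (rule ideal_smult_submodule)
  let ?J = "{x \<in> carrier R. \<forall>m\<in>carrier M. x \<odot>\<^bsub>M\<^esub> m \<in> ?N}"
  have "ideal ?J R"
  proof (rule idealI[OF ring_axioms])
    show "subgroup ?J (add_monoid R)"
      using submodule_zero[OF N] submoduleE(3,5)[OF N]
      by (intro subgroup.intro) (auto simp: smult_l_distr smult_l_minus a_inv_def[symmetric])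
  qed (use submoduleE(4)[OF N] in \<open>auto simp: smult_assoc1 m_comm\<close>)
  moreover have "A \<subseteq> ?J" using assms smult_mem_ideal_smult by auto
  ultimately have "genideal R A \<subseteq> ?J" by (rule genideal_minimal)
  then show "ideal_smult R M (genideal R A) \<subseteq> ?N" by (intro ideal_smult_least[OF N]) auto
  show "?N \<subseteq> ideal_smult R M (genideal R A)"
    using genideal_self[OF assms] by (intro ideal_smult_least[OF ideal_smult_submodule])
      (auto intro: smult_mem_ideal_smult genideal_ideal[OF assms, THEN ideal.Icarr])
qed

lemma (in module) ideal_smult_insert_step:
  assumes H: "H \<subseteq> carrier R" and a: "a \<in> carrier R" and c: "c \<in> carrier R"
    and u: "u \<in> carrier R" "u \<otimes> u = u"
    and u_insert: "\<And>y. y \<in> carrier M \<Longrightarrow> u \<odot>\<^bsub>M\<^esub> y \<in> ideal_smult R M (insert a H)"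
    and ca: "\<And>y. y \<in> carrier M \<Longrightarrow> (c \<otimes> a \<otimes> u) \<odot>\<^bsub>M\<^esub> y \<in> ideal_smult R M H"
    and y: "y \<in> carrier M"
  shows "(c \<otimes> u) \<odot>\<^bsub>M\<^esub> y \<in> ideal_smult R M H"
proof -
  have cu: "c \<otimes> u \<in> carrier R" using c u by simp
  let ?Z = "{z \<in> carrier M. (c \<otimes> u) \<odot>\<^bsub>M\<^esub> z \<in> ideal_smult R M H}"
  have "ideal_smult R M (insert a H) \<subseteq> ?Z"
  proof (rule ideal_smult_least[OF submodule_smult_preimage[OF cu ideal_smult_submodule[OF H]]])
    fix x m assume x: "x \<in> insert a H" and m: "m \<in> carrier M"
    then have xc: "x \<in> carrier R" using H a by auto
    show "x \<odot>\<^bsub>M\<^esub> m \<in> ?Z"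
    proof (cases "x = a")
      case True
      have "(c \<otimes> u) \<odot>\<^bsub>M\<^esub> (a \<odot>\<^bsub>M\<^esub> m) = (c \<otimes> a \<otimes> u) \<odot>\<^bsub>M\<^esub> m"
        using a c u m by (simp add: smult_assoc1[symmetric] m_ac)
      then show ?thesis using True ca[OF m] a m by simp
    next
      case False
      then have "x \<in> H" using x by simp
      moreover have "(c \<otimes> u) \<odot>\<^bsub>M\<^esub> (x \<odot>\<^bsub>M\<^esub> m) = x \<odot>\<^bsub>M\<^esub> ((c \<otimes> u) \<odot>\<^bsub>M\<^esub> m)"
        using xc c u m by (simp add: smult_assoc1[symmetric] m_ac)
      ultimately show ?thesis using smult_mem_ideal_smult cu xc m by simp
    qed
  qed
  then have "(c \<otimes> u) \<odot>\<^bsub>M\<^esub> (u \<odot>\<^bsub>M\<^esub> y) \<in> ideal_smult R M H" using u_insert[OF y] by blast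
  then show ?thesis using c u y by (simp add: smult_assoc1[symmetric] m_assoc)
qed

lemma (in module) ideal_smult_remove_nilpotent:
  assumes H: "H \<subseteq> carrier R" and a: "a \<in> carrier R"
    and u: "u \<in> carrier R" "u \<otimes> u = u" "u \<otimes> a [^] (p::nat) = \<zero>"
    and u_insert: "\<And>y. y \<in> carrier M \<Longrightarrow> u \<odot>\<^bsub>M\<^esub> y \<in> ideal_smult R M (insert a H)"
    and y: "y \<in> carrier M"
  shows "u \<odot>\<^bsub>M\<^esub> y \<in> ideal_smult R M H"
proof -
  have "\<forall>y\<in>carrier M. (a [^] k \<otimes> u) \<odot>\<^bsub>M\<^esub> y \<in> ideal_smult R M H" if "k \<le> p" for k
    using that
  proof (induction k rule: inc_induct)
    case base
    then show ?case
      using u a submodule_zero[OF ideal_smult_submodule[OF H]] by (simp add: m_comm)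
  next
    case (step k)
    then show ?case
      using ideal_smult_insert_step[OF H a _ u(1,2) u_insert, of "a [^] k"] a u(1) by (simp add: m_assoc)
  qed
  from this[of 0] show ?thesis using u(1) y by simp
qed

lemma (in module) smult_eq_zero_if_ideal_smult_nilpotent:
  assumes H: "finite H" "H \<subseteq> carrier R" and u: "u \<in> carrier R" "u \<otimes> u = u"
    and nil: "\<And>a. a \<in> H \<Longrightarrow> \<exists>p::nat. u \<otimes> a [^] p = \<zero>"
    and u_H: "\<And>y. y \<in> carrier M \<Longrightarrow> u \<odot>\<^bsub>M\<^esub> y \<in> ideal_smult R M H"
    and y: "y \<in> carrier M"
  shows "u \<odot>\<^bsub>M\<^esub> y = \<zero>\<^bsub>M\<^esub>"
proof -
  have "u \<odot>\<^bsub>M\<^esub> y \<in> ideal_smult R M {}"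
    using H nil u_H y
  proof (induction H arbitrary: y rule: finite_induct)
    case (insert a F)
    obtain p :: nat where "u \<otimes> a [^] p = \<zero>" using insert.prems(2) by blast
    then show ?case
      using insert ideal_smult_remove_nilpotent[of F a u p] u by simp
  qed simp
  then show ?thesis using ideal_smult_empty by simp
qed

lemma (in module) genideal_eq_carrier_if_ideal_smult_eq_carrier:
  assumes pr: "pi_regular R" and faithful: "faithful_mod R M"
    and G: "finite G" "G \<subseteq> carrier R" and full: "ideal_smult R M (genideal R G) = carrier M"
  shows "genideal R G = carrier R"
proof -
  obtain u where u: "u \<in> carrier R" "u \<otimes> u = u" "\<one> \<ominus> u \<in> genideal R G"
    and nil: "\<And>a. a \<in> G \<Longrightarrow> \<exists>p::nat. u \<otimes> a [^] p = \<zero>"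
    using pi_regular_finite_idempotent[OF pr G] by blast
  have "\<forall>y\<in>carrier M. u \<odot>\<^bsub>M\<^esub> y = \<zero>\<^bsub>M\<^esub>"
    using smult_eq_zero_if_ideal_smult_nilpotent[OF G u(1,2) nil] full u(1)
    by (simp add: ideal_smult_genideal[OF G(2)])
  then have "u = \<zero>" using faithful u(1) unfolding faithful_mod_def by blast
  then have "\<one> \<in> genideal R G" using u(3) by (simp add: a_minus_def)
  then show ?thesis by (rule ideal.one_imp_carrier[OF genideal_ideal[OF G(2)]])
qed

lemma (in module) dual_proper_strong_A_if_pi_regular_faithful:
  assumes "pi_regular R" "faithful_mod R M"
  shows "dual_proper_strong_A R M"
  unfolding dual_proper_strong_A_def W_mod_def
  using genideal_eq_carrier_if_ideal_smult_eq_carrier[OF assms] by blast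

section \<open>\<open>M\<close> as a module over \<open>R/Ann(M)\<close>\<close>

lemma (in ring) FactRing_carrierE:
  assumes "c \<in> carrier (R Quot I)"
  obtains a where "a \<in> carrier R" "c = I +> a"
  using assms unfolding FactRing_def A_RCOSETS_def' by auto

lemma (in ideal) pi_regular_quotient:
  assumes "pi_regular R"
  shows "pi_regular (R Quot I)"
  unfolding pi_regular_def
proof
  interpret h: ring_hom_ring R "R Quot I" "(+>) I" by (rule rcos_ring_hom_ring)
  fix c assume "c \<in> carrier (R Quot I)"
  then obtain a where a: "a \<in> carrier R" and c: "c = I +> a" by (rule FactRing_carrierE)
  obtain p b where b: "b \<in> carrier R" and ab: "a [^] (p::nat) = a [^] Suc p \<otimes> b"
    using assms a unfolding pi_regular_def by blast
  have "c [^]\<^bsub>R Quot I\<^esub> p = I +> (a [^] Suc p \<otimes> b)"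
    unfolding c h.hom_nat_pow[OF a, symmetric] ab ..
  also have "\<dots> = (I +> a [^] Suc p) \<otimes>\<^bsub>R Quot I\<^esub> (I +> b)"
    using a b by (intro h.hom_mult) auto
  also have "I +> a [^] Suc p = c [^]\<^bsub>R Quot I\<^esub> Suc p"
    unfolding c by (rule h.hom_nat_pow[OF a])
  finally show "\<exists>p b. b \<in> carrier (R Quot I) \<and>
      c [^]\<^bsub>R Quot I\<^esub> (p::nat) = c [^]\<^bsub>R Quot I\<^esub> Suc p \<otimes>\<^bsub>R Quot I\<^esub> b"
    using h.hom_closed[OF b] by blast
qed

lemma (in module) ann_mod_ideal: "ideal (ann_mod R M) R"
proof (rule idealI[OF ring_axioms])
  show "subgroup (ann_mod R M) (add_monoid R)"
    unfolding ann_mod_def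
    by (intro subgroup.intro) (auto simp: smult_l_distr smult_l_minus a_inv_def[symmetric])
qed (auto simp: ann_mod_def smult_assoc1 m_comm)

lemma quot_ann_module_simps [simp]:
  "carrier (quot_ann_module R M) = carrier M"
  "x \<oplus>\<^bsub>quot_ann_module R M\<^esub> y = x \<oplus>\<^bsub>M\<^esub> y"
  "\<zero>\<^bsub>quot_ann_module R M\<^esub> = \<zero>\<^bsub>M\<^esub>"
  unfolding quot_ann_module_def by simp_all

lemma (in module) quot_ann_module_smult:
  assumes a: "a \<in> carrier R" and m: "m \<in> carrier M"
  shows "(ann_mod R M +> a) \<odot>\<^bsub>quot_ann_module R M\<^esub> m = a \<odot>\<^bsub>M\<^esub> m"
proof -
  have "\<zero> \<in> ann_mod R M" unfolding ann_mod_def by auto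
  then have "a \<in> ann_mod R M +> a" unfolding a_r_coset_def' using a by force
  then have "(SOME r. r \<in> ann_mod R M +> a) \<in> ann_mod R M +> a" by (rule someI)
  then obtain h where h: "h \<in> ann_mod R M" and rep: "(SOME r. r \<in> ann_mod R M +> a) = h \<oplus> a"
    unfolding a_r_coset_def' by blast
  have "(ann_mod R M +> a) \<odot>\<^bsub>quot_ann_module R M\<^esub> m = (h \<oplus> a) \<odot>\<^bsub>M\<^esub> m"
    unfolding quot_ann_module_def by (simp add: rep)
  also have "\<dots> = a \<odot>\<^bsub>M\<^esub> m"
    using h a m by (simp add: ann_mod_def smult_l_distr)
  finally show ?thesis .
qed

lemma (in module) module_quot_ann_module: "module (R Quot ann_mod R M) (quot_ann_module R M)"
proof -
  let ?A = "ann_mod R M" and ?Q = "R Quot ann_mod R M" and ?N = "quot_ann_module R M"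
  interpret A: ideal ?A R by (rule ann_mod_ideal)
  interpret h: ring_hom_ring R ?Q "(+>) ?A" by (rule A.rcos_ring_hom_ring)
  note smult = quot_ann_module_smult
  show ?thesis
  proof (rule moduleI)
    show "cring ?Q" by (rule A.quotient_is_cring[OF is_cring])
    show "abelian_group ?N"
      using M.l_neg M.a_inv_closed by (intro abelian_groupI) (auto simp: M.a_ac)
    show "a \<odot>\<^bsub>?N\<^esub> x \<in> carrier ?N" if "a \<in> carrier ?Q" "x \<in> carrier ?N" for a x
      using that by (elim FactRing_carrierE) (simp add: smult)
    show "(a \<oplus>\<^bsub>?Q\<^esub> b) \<odot>\<^bsub>?N\<^esub> x = (a \<odot>\<^bsub>?N\<^esub> x) \<oplus>\<^bsub>?N\<^esub> (b \<odot>\<^bsub>?N\<^esub> x)"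
      if "a \<in> carrier ?Q" "b \<in> carrier ?Q" "x \<in> carrier ?N" for a b x
      using that by (elim FactRing_carrierE) (simp add: smult h.hom_add[symmetric] smult_l_distr del: h.hom_add)
    show "a \<odot>\<^bsub>?N\<^esub> (x \<oplus>\<^bsub>?N\<^esub> y) = (a \<odot>\<^bsub>?N\<^esub> x) \<oplus>\<^bsub>?N\<^esub> (a \<odot>\<^bsub>?N\<^esub> y)"
      if "a \<in> carrier ?Q" "x \<in> carrier ?N" "y \<in> carrier ?N" for a x y
      using that by (elim FactRing_carrierE) (simp add: smult smult_r_distr)
    show "(a \<otimes>\<^bsub>?Q\<^esub> b) \<odot>\<^bsub>?N\<^esub> x = a \<odot>\<^bsub>?N\<^esub> (b \<odot>\<^bsub>?N\<^esub> x)"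
      if "a \<in> carrier ?Q" "b \<in> carrier ?Q" "x \<in> carrier ?N" for a b x
      using that by (elim FactRing_carrierE) (simp add: smult h.hom_mult[symmetric] smult_assoc1 del: h.hom_mult)
    show "\<one>\<^bsub>?Q\<^esub> \<odot>\<^bsub>?N\<^esub> x = x" if "x \<in> carrier ?N" for x
      using that by (simp add: smult h.hom_one[symmetric] del: h.hom_one)
  qed
qed

lemma (in module) faithful_quot_ann_module: "faithful_mod (R Quot ann_mod R M) (quot_ann_module R M)"
  unfolding faithful_mod_def
proof (intro ballI impI)
  let ?A = "ann_mod R M" and ?Q = "R Quot ann_mod R M" and ?N = "quot_ann_module R M"
  fix c assume "c \<in> carrier ?Q" and kills: "\<forall>m\<in>carrier ?N. c \<odot>\<^bsub>?N\<^esub> m = \<zero>\<^bsub>?N\<^esub>"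
  then obtain a where a: "a \<in> carrier R" and c: "c = ?A +> a" by (elim FactRing_carrierE)
  have "a \<in> ?A"
    using kills a quot_ann_module_smult unfolding c by (simp add: ann_mod_def)
  then show "c = \<zero>\<^bsub>?Q\<^esub>"
    using a_rcos_zero[OF ann_mod_ideal] unfolding c FactRing_def by simp
qed

theorem proposition3p9:
  fixes R :: "('a, 'c) ring_scheme"
  assumes "cring R"
    and "krull_dim_zero R"
  shows "(\<forall>M :: ('a, 'b) module. module R M \<and> faithful_mod R M \<longrightarrow> dual_proper_strong_A R M)
       \<and> (\<forall>M :: ('a, 'b) module. module R M \<longrightarrow>
            dual_proper_strong_A (R Quot (ann_mod R M)) (quot_ann_module R M))"
proof -
  have pi_reg: "pi_regular R" using cring.pi_regular_if_krull_dim_zero[OF assms] .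
  have "dual_proper_strong_A R M" if "module R M" "faithful_mod R M" for M :: "('a, 'b) module"
    using module.dual_proper_strong_A_if_pi_regular_faithful[OF that(1) pi_reg that(2)] .
  moreover have "dual_proper_strong_A (R Quot ann_mod R M) (quot_ann_module R M)"
    if "module R M" for M :: "('a, 'b) module"
  proof -
    interpret module R M by (rule that)
    show ?thesis
      using module.dual_proper_strong_A_if_pi_regular_faithful[OF module_quot_ann_module
          ideal.pi_regular_quotient[OF ann_mod_ideal pi_reg] faithful_quot_ann_module] .
  qed
  ultimately show ?thesis by blast
qed

end
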